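(* Every group containing the free group $F_2$ has weak paradoxical towers.
   Context: For $n\in\mathbb N$, a group $G$ has weak $n$-paradoxical towers if for every $m\in\mathbb N$ there exist a finite subset $D\subseteq G$ with $|D|\ge m$, subsets $K_1,\dots,K_n\subseteq G$ and elements $g_1,\dots,g_n\in G$ such that for each $j$ the sets $\{dK_j\}_{d\in D}$ are pairwise disjoint, and $\bigcup_{j=1}^n g_jK_j=G$. $G$ has weak paradoxical towers if it has weak $n$-paradoxical towers for some $n$. *)

theory Defs
  imports "HOL-Algebra.Group" "HOL-Algebra.Coset"
begin

text \<open>Letters are pairs (generator, inverted?): the generator is a boolean
  (False = a, True = b) and the second component says whether the letter is
  the inverse of the generator.\<close>

type_synonym letter2 = "bool \<times> bool"

definition inverse_letters :: "letter2 \<Rightarrow> letter2 \<Rightarrow> bool" where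
  "inverse_letters x y \<longleftrightarrow> fst x = fst y \<and> snd x \<noteq> snd y"

fun reduced :: "letter2 list \<Rightarrow> bool" where
  "reduced [] = True"
| "reduced [x] = True"
| "reduced (x # y # ys) = (\<not> inverse_letters x y \<and> reduced (y # ys))"

definition red_cons :: "letter2 \<Rightarrow> letter2 list \<Rightarrow> letter2 list" where
  "red_cons x ys = (case ys of [] \<Rightarrow> [x]
     | y # ys' \<Rightarrow> (if inverse_letters x y then ys' else x # ys))"

definition reduce :: "letter2 list \<Rightarrow> letter2 list" where
  "reduce xs = foldr red_cons xs []"

definition free_group2 :: "letter2 list monoid" where
  "free_group2 = \<lparr> carrier = {w. reduced w}, mult = (\<lambda>x y. reduce (x @ y)), one = [] \<rparr>"

definition contains_F2 :: "('a, 'b) monoid_scheme \<Rightarrow> bool" where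
  "contains_F2 G \<longleftrightarrow> (\<exists>h. h \<in> hom free_group2 G \<and> inj_on h (carrier free_group2))"

definition weak_n_paradoxical_towers :: "('a, 'b) monoid_scheme \<Rightarrow> nat \<Rightarrow> bool" where
  "weak_n_paradoxical_towers G n \<longleftrightarrow>
    (\<forall>m::nat. \<exists>(D::'a set) (K::nat \<Rightarrow> 'a set) (g::nat \<Rightarrow> 'a).
       finite D \<and> D \<subseteq> carrier G \<and> card D \<ge> m \<and>
       (\<forall>j\<in>{1..n}. K j \<subseteq> carrier G \<and> g j \<in> carrier G) \<and>
       (\<forall>j\<in>{1..n}. \<forall>d\<in>D. \<forall>d'\<in>D. d \<noteq> d' \<longrightarrow>
            (d <#\<^bsub>G\<^esub> K j) \<inter> (d' <#\<^bsub>G\<^esub> K j) = {}) \<and>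
       (\<Union>j\<in>{1..n}. g j <#\<^bsub>G\<^esub> K j) = carrier G)"

definition weak_paradoxical_towers :: "('a, 'b) monoid_scheme \<Rightarrow> bool" where
  "weak_paradoxical_towers G \<longleftrightarrow> (\<exists>n::nat. weak_n_paradoxical_towers G n)"

end

theory Submission
  imports Defs
begin

(* In F2 = <a, b> let A+ and A- be the reduced words beginning with a and with a^-1. Then
   F2 = A+ \<union> a A-, while the translates b^i A+ (i < m) are pairwise disjoint, and so are the
   b^i A-, because their elements begin with exactly i letters b: F2 has weak 2-paradoxical
   towers. They pass to the isomorphic image H of F2 in G, and from H to G by multiplying each
   K_j on the right by a right transversal T of H, since every element of G is uniquely
   h t with h \<in> H and t \<in> T. *)

definition weak_paradoxical_tower ::
    "('a, 'b) monoid_scheme \<Rightarrow> nat \<Rightarrow> 'a set \<Rightarrow> (nat \<Rightarrow> 'a set) \<Rightarrow> (nat \<Rightarrow> 'a) \<Rightarrow> bool" where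
  "weak_paradoxical_tower G n D K g \<longleftrightarrow> D \<subseteq> carrier G \<and>
     (\<forall>j\<in>{1..n}. K j \<subseteq> carrier G \<and> g j \<in> carrier G) \<and>
     (\<forall>j\<in>{1..n}. \<forall>d\<in>D. \<forall>d'\<in>D. d \<noteq> d' \<longrightarrow> (d <#\<^bsub>G\<^esub> K j) \<inter> (d' <#\<^bsub>G\<^esub> K j) = {}) \<and>
     (\<Union>j\<in>{1..n}. g j <#\<^bsub>G\<^esub> K j) = carrier G"

lemma weak_n_paradoxical_towers_iff:
  "weak_n_paradoxical_towers G n \<longleftrightarrow>
     (\<forall>m. \<exists>D K g. finite D \<and> m \<le> card D \<and> weak_paradoxical_tower G n D K g)"
  unfolding weak_n_paradoxical_towers_def weak_paradoxical_tower_def by (simp add: conj_ac)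

definition right_transversal :: "('a, 'b) monoid_scheme \<Rightarrow> 'a set \<Rightarrow> 'a set \<Rightarrow> bool" where
  "right_transversal G H T \<longleftrightarrow> T \<subseteq> carrier G \<and> H <#>\<^bsub>G\<^esub> T = carrier G \<and>
     (\<forall>\<eta>\<in>H. \<forall>\<eta>'\<in>H. \<forall>t\<in>T. \<forall>t'\<in>T. \<eta> \<otimes>\<^bsub>G\<^esub> t = \<eta>' \<otimes>\<^bsub>G\<^esub> t' \<longrightarrow> t = t')"

lemma (in group) right_transversal_exists:
  assumes H: "subgroup H G"
  shows "\<exists>T. right_transversal G H T"
proof
  define rep where "rep C = (SOME t. t \<in> C)" for C :: "'a set"
  have HG: "H \<subseteq> carrier G"
    using H subgroup.subset by blast
  have rep: "rep C \<in> C" if "C \<in> rcosets H" for C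
    unfolding rep_def using subgroup.rcosets_non_empty[OF H that] by (simp add: some_in_eq)
  have absorb: "H <#> C = C" if "C \<in> rcosets H" for C
    using that HG by (auto simp: RCOSETS_def setmult_rcos_assoc subgroup_mult_id[OF H])
  have "rep ` (rcosets H) \<subseteq> carrier G"
    using rep subgroup.rcosets_carrier[OF H is_group] by blast
  moreover have "H <#> rep ` (rcosets H) = carrier G"
  proof
    have "H <#> rep ` (rcosets H) \<subseteq> (\<Union>C\<in>rcosets H. H <#> C)"
      using rep by (auto simp: set_mult_def)
    then show "H <#> rep ` (rcosets H) \<subseteq> carrier G"
      using absorb rcosets_part_G[OF H] by auto
  next
    show "carrier G \<subseteq> H <#> rep ` (rcosets H)"
    proof
      fix x assume x: "x \<in> carrier G"
      then have C: "H #> x \<in> rcosets H"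
        using HG by (rule_tac rcosetsI)
      then have "H #> x = H #> rep (H #> x)"
        using rep x H by (rule_tac repr_independence)
      then have "x \<in> H <#> {rep (H #> x)}"
        using rcos_self[OF x H] by (simp add: r_coset_eq_set_mult)
      then show "x \<in> H <#> rep ` (rcosets H)"
        using C mono_set_mult[of H H "{rep (H #> x)}"] by blast
    qed
  qed
  moreover have "t = t'"
    if \<eta>: "\<eta> \<in> H" "\<eta>' \<in> H" and t: "t \<in> rep ` (rcosets H)" "t' \<in> rep ` (rcosets H)"
      and eq: "\<eta> \<otimes> t = \<eta>' \<otimes> t'" for \<eta> \<eta>' t t'
  proof -
    obtain C C' where C: "C \<in> rcosets H" "t = rep C" and C': "C' \<in> rcosets H" "t' = rep C'"
      using t by blast
    have "\<eta> \<otimes> t \<in> C"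
      using absorb[OF C(1)] rep[OF C(1)] C(2) \<eta>(1) unfolding set_mult_def by blast
    moreover have "\<eta>' \<otimes> t' \<in> C'"
      using absorb[OF C'(1)] rep[OF C'(1)] C'(2) \<eta>(2) unfolding set_mult_def by blast
    ultimately have "C = C'"
      using rcos_disjoint[OF H] C C' eq by (auto simp: pairwise_def disjnt_def)
    then show "t = t'"
      using C C' by simp
  qed
  ultimately show "right_transversal G H (rep ` (rcosets H))"
    unfolding right_transversal_def by blast
qed

lemma (in group) set_mult_right_transversal_disjoint:
  assumes T: "right_transversal G H T" and "subgroup H G"
    and "A \<subseteq> H" "B \<subseteq> H" "A \<inter> B = {}"
  shows "(A <#> T) \<inter> (B <#> T) = {}"
proof -
  have "a \<otimes> t \<noteq> b \<otimes> t'" if "a \<in> A" "b \<in> B" "t \<in> T" "t' \<in> T" for a b t t'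
  proof
    assume eq: "a \<otimes> t = b \<otimes> t'"
    with that assms have "t = t'"
      unfolding right_transversal_def by blast
    moreover have "a \<in> carrier G" "b \<in> carrier G" "t \<in> carrier G"
      using that assms subgroup.subset unfolding right_transversal_def by blast+
    ultimately have "a = b"
      using eq by simp
    with that assms show False by blast
  qed
  then show ?thesis
    unfolding set_mult_def by blast
qed

lemma weak_paradoxical_tower_from_subgroup:
  fixes G (structure)
  assumes "group G" and H: "subgroup H G" and T: "right_transversal G H T"
    and tower: "weak_paradoxical_tower (G\<lparr>carrier := H\<rparr>) n D K g"
  shows "weak_paradoxical_tower G n D (\<lambda>j. K j <#> T) g"
proof -
  interpret group G by fact
  have HG: "H \<subseteq> carrier G" and TG: "T \<subseteq> carrier G" and HT: "H <#> T = carrier G"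
    using H subgroup.subset T unfolding right_transversal_def by auto
  have D: "D \<subseteq> H" and Kg: "\<forall>j\<in>{1..n}. K j \<subseteq> H \<and> g j \<in> H"
    and disjoint: "\<forall>j\<in>{1..n}. \<forall>d\<in>D. \<forall>d'\<in>D. d \<noteq> d' \<longrightarrow> (d <# K j) \<inter> (d' <# K j) = {}"
    and cover: "(\<Union>j\<in>{1..n}. g j <# K j) = H"
    using tower by (auto simp: weak_paradoxical_tower_def)
  have KG: "K j \<subseteq> carrier G" if "j \<in> {1..n}" for j
    using that Kg HG by blast
  have coset_assoc: "d <# (K j <#> T) = (d <# K j) <#> T" if "d \<in> H" "j \<in> {1..n}" for d j
    using that HG KG TG by (simp add: setmult_lcos_assoc subsetD)
  have coset_in_H: "d <# K j \<subseteq> H" if "d \<in> H" "j \<in> {1..n}" for d j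
    using that Kg subgroup.m_closed[OF H] unfolding l_coset_def by blast
  have "K j <#> T \<subseteq> carrier G" if "j \<in> {1..n}" for j
    using setmult_subset_G[OF KG[OF that] TG] .
  moreover have "(d <# (K j <#> T)) \<inter> (d' <# (K j <#> T)) = {}"
    if j: "j \<in> {1..n}" and "d \<in> D" "d' \<in> D" "d \<noteq> d'" for j d d'
  proof -
    have d: "d \<in> H" "d' \<in> H"
      using that D by auto
    have "(d <# K j) \<inter> (d' <# K j) = {}"
      using disjoint that by blast
    then have "(d <# K j <#> T) \<inter> (d' <# K j <#> T) = {}"
      by (intro set_mult_right_transversal_disjoint[OF T H coset_in_H[OF d(1) j] coset_in_H[OF d(2) j]])
    with d j show ?thesis
      by (simp add: coset_assoc)
  qed
  moreover have "(\<Union>j\<in>{1..n}. g j <# (K j <#> T)) = (\<Union>j\<in>{1..n}. (g j <# K j) <#> T)"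
    using Kg by (simp add: coset_assoc)
  moreover have "(\<Union>j\<in>{1..n}. (g j <# K j) <#> T) = (\<Union>j\<in>{1..n}. g j <# K j) <#> T"
    by (auto simp: set_mult_def)
  ultimately show ?thesis
    using D HG Kg cover HT unfolding weak_paradoxical_tower_def by auto
qed

lemma weak_n_paradoxical_towers_from_subgroup:
  assumes "group G" "subgroup H G" and towers: "weak_n_paradoxical_towers (G\<lparr>carrier := H\<rparr>) n"
  shows "weak_n_paradoxical_towers G n"
  unfolding weak_n_paradoxical_towers_iff
proof
  fix m
  obtain T where "right_transversal G H T"
    using group.right_transversal_exists assms(1,2) by blast
  moreover obtain D K g where "finite D" "m \<le> card D"
    "weak_paradoxical_tower (G\<lparr>carrier := H\<rparr>) n D K g"
    using towers unfolding weak_n_paradoxical_towers_iff by blast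
  ultimately show "\<exists>D K g. finite D \<and> m \<le> card D \<and> weak_paradoxical_tower G n D K g"
    using weak_paradoxical_tower_from_subgroup[OF assms(1,2)] by blast
qed

lemma weak_paradoxical_tower_image:
  assumes "group F" and h: "h \<in> hom F G" and inj: "inj_on h (carrier F)"
    and tower: "weak_paradoxical_tower F n D K g"
  shows "weak_paradoxical_tower (G\<lparr>carrier := h ` carrier F\<rparr>) n (h ` D) (\<lambda>j. h ` K j) (\<lambda>j. h (g j))"
proof -
  interpret F: group F by fact
  have D: "D \<subseteq> carrier F" and Kg: "\<forall>j\<in>{1..n}. K j \<subseteq> carrier F \<and> g j \<in> carrier F"
    and disjoint: "\<forall>j\<in>{1..n}. \<forall>d\<in>D. \<forall>d'\<in>D. d \<noteq> d' \<longrightarrow>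
        (d <#\<^bsub>F\<^esub> K j) \<inter> (d' <#\<^bsub>F\<^esub> K j) = {}"
    and cover: "(\<Union>j\<in>{1..n}. g j <#\<^bsub>F\<^esub> K j) = carrier F"
    using tower by (auto simp: weak_paradoxical_tower_def)
  have image_coset: "h d <#\<^bsub>G\<^esub> h ` K j = h ` (d <#\<^bsub>F\<^esub> K j)"
    if "d \<in> carrier F" "j \<in> {1..n}" for d j
    using coset_hom(1)[OF h] that Kg by auto
  have "(h d <#\<^bsub>G\<^esub> h ` K j) \<inter> (h d' <#\<^bsub>G\<^esub> h ` K j) = {}"
    if j: "j \<in> {1..n}" and d: "d \<in> D" "d' \<in> D" "h d \<noteq> h d'" for j d d'
  proof -
    have "K j \<subseteq> carrier F" "d \<in> carrier F" "d' \<in> carrier F"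
      using j d D Kg by blast+
    then have "d <#\<^bsub>F\<^esub> K j \<subseteq> carrier F" "d' <#\<^bsub>F\<^esub> K j \<subseteq> carrier F"
      by (simp_all add: F.l_coset_subset_G)
    moreover have "(d <#\<^bsub>F\<^esub> K j) \<inter> (d' <#\<^bsub>F\<^esub> K j) = {}"
      using disjoint j d by metis
    ultimately show ?thesis
      using j d D by (simp add: image_coset subsetD flip: inj_on_image_Int[OF inj])
  qed
  moreover have "\<forall>j\<in>{1..n}. h ` K j \<subseteq> h ` carrier F \<and> h (g j) \<in> h ` carrier F"
    using Kg by blast
  moreover have "(\<Union>j\<in>{1..n}. h (g j) <#\<^bsub>G\<^esub> h ` K j) = h ` (\<Union>j\<in>{1..n}. g j <#\<^bsub>F\<^esub> K j)"
    using Kg by (simp add: image_coset image_UN)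
  ultimately show ?thesis
    using D cover by (auto simp: weak_paradoxical_tower_def)
qed

lemma weak_n_paradoxical_towers_inj_hom:
  assumes "group F" "group G" "h \<in> hom F G" "inj_on h (carrier F)"
    and "weak_n_paradoxical_towers F n"
  shows "weak_n_paradoxical_towers G n"
proof (rule weak_n_paradoxical_towers_from_subgroup)
  show "subgroup (h ` carrier F) G"
    using assms by (intro group_hom.img_is_subgroup) (simp add: group_hom_def group_hom_axioms_def)
  show "weak_n_paradoxical_towers (G\<lparr>carrier := h ` carrier F\<rparr>) n"
    unfolding weak_n_paradoxical_towers_iff
  proof
    fix m
    obtain D K g where D: "finite D" "m \<le> card D" and tower: "weak_paradoxical_tower F n D K g"
      using assms(5) unfolding weak_n_paradoxical_towers_iff by blast
    have "D \<subseteq> carrier F"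
      using tower by (simp add: weak_paradoxical_tower_def)
    then have "card (h ` D) = card D"
      using assms(4) by (meson card_image inj_on_subset)
    with D have "finite (h ` D)" "m \<le> card (h ` D)"
      by simp_all
    with weak_paradoxical_tower_image[OF assms(1,3,4) tower]
    show "\<exists>D K g. finite D \<and> m \<le> card D \<and>
        weak_paradoxical_tower (G\<lparr>carrier := h ` carrier F\<rparr>) n D K g"
      by blast
  qed
qed (fact assms)

lemma reduced_ConsD: "reduced (x # xs) \<Longrightarrow> reduced xs"
  by (cases xs) auto

lemma reduced_red_cons: "reduced ys \<Longrightarrow> reduced (red_cons x ys)"
  unfolding red_cons_def by (cases ys) (auto dest: reduced_ConsD)

lemma reduced_foldr_red_cons: "reduced ys \<Longrightarrow> reduced (foldr red_cons xs ys)"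
  by (induction xs) (auto intro: reduced_red_cons)

lemma reduced_reduce: "reduced (reduce xs)"
  unfolding reduce_def by (simp add: reduced_foldr_red_cons)

lemma reduce_reduced: "reduced xs \<Longrightarrow> reduce xs = xs"
proof (induction xs)
  case (Cons x xs)
  then have "reduce xs = xs" using reduced_ConsD by blast
  with Cons.prems show ?case
    by (cases xs) (auto simp: reduce_def red_cons_def)
qed (simp add: reduce_def)

lemma reduce_append: "reduce (xs @ ys) = foldr red_cons xs (reduce ys)"
  unfolding reduce_def by simp

definition inv_letter :: "letter2 \<Rightarrow> letter2" where
  "inv_letter c = (fst c, \<not> snd c)"

lemma inverse_letters_iff: "inverse_letters x y \<longleftrightarrow> x = inv_letter y"
  by (cases x; cases y) (auto simp: inverse_letters_def inv_letter_def)

lemma red_cons_inv_letter_cancel: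
  assumes "reduced ys"
  shows "red_cons (inv_letter c) (red_cons c ys) = ys"
proof (cases "ys = [] \<or> \<not> inverse_letters c (hd ys)")
  case True
  then show ?thesis
    by (cases ys) (auto simp: red_cons_def inverse_letters_iff inv_letter_def)
next
  case False
  then obtain y zs where "ys = y # zs" "c = inv_letter y"
    by (cases ys) (auto simp: inverse_letters_iff)
  with assms show ?thesis
    by (cases zs) (auto simp: red_cons_def inverse_letters_iff inv_letter_def)
qed

lemma foldr_red_cons_red_cons:
  assumes "reduced ys"
  shows "foldr red_cons (red_cons x w) ys = red_cons x (foldr red_cons w ys)"
proof (cases w)
  case (Cons y w')
  show ?thesis
  proof (cases "inverse_letters x y")
    case True
    then have "x = inv_letter y" by (simp add: inverse_letters_iff)
    with Cons True show ?thesis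
      using red_cons_inv_letter_cancel[OF reduced_foldr_red_cons[OF assms]]
      by (simp add: red_cons_def)
  qed (simp add: Cons red_cons_def)
qed (simp add: red_cons_def)

lemma foldr_red_cons_reduce:
  "reduced ys \<Longrightarrow> foldr red_cons (reduce xs) ys = foldr red_cons xs ys"
  by (induction xs) (simp_all add: reduce_def foldr_red_cons_red_cons)

lemma reduce_reduce_append: "reduce (reduce xs @ ys) = reduce (xs @ ys)"
  by (simp add: reduce_append foldr_red_cons_reduce reduced_reduce)

lemma reduce_append_reduce: "reduce (xs @ reduce ys) = reduce (xs @ ys)"
  by (simp add: reduce_append reduce_reduced reduced_reduce)

lemma foldr_red_cons_inverse_word:
  "reduced ys \<Longrightarrow> foldr red_cons (rev (map inv_letter xs)) (foldr red_cons xs ys) = ys"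
proof (induction xs arbitrary: ys)
  case (Cons c xs)
  then show ?case
    by (simp add: red_cons_inv_letter_cancel reduced_foldr_red_cons)
qed simp

lemma group_free_group2: "group free_group2"
proof (rule groupI)
  fix x assume "x \<in> carrier free_group2"
  let ?x' = "rev (map inv_letter x)"
  have "reduce (reduce ?x' @ x) = foldr red_cons ?x' (foldr red_cons x [])"
    by (simp add: reduce_append foldr_red_cons_reduce reduced_reduce flip: reduce_def)
  also have "\<dots> = []"
    by (simp add: foldr_red_cons_inverse_word)
  finally show "\<exists>y\<in>carrier free_group2. y \<otimes>\<^bsub>free_group2\<^esub> x = \<one>\<^bsub>free_group2\<^esub>"
    using reduced_reduce by (auto simp: free_group2_def)
qed (auto simp: free_group2_def reduced_reduce reduce_reduced reduce_reduce_append
    reduce_append_reduce)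

lemma l_coset_free_group2: "d <#\<^bsub>free_group2\<^esub> K = (\<lambda>k. reduce (d @ k)) ` K"
  by (auto simp: l_coset_def free_group2_def)

lemma reduced_replicate: "reduced (replicate i x)"
proof (induction i)
  case (Suc i) then show ?case by (cases i) (auto simp: inverse_letters_def)
qed simp

lemma reduced_replicate_append:
  assumes "fst x \<noteq> fst y" "reduced (y # ys)"
  shows "reduced (replicate i x @ y # ys)"
  using assms
proof (induction i)
  case (Suc i) then show ?case by (cases i) (auto simp: inverse_letters_def)
qed simp

lemma takeWhile_replicate_append:
  "x \<noteq> y \<Longrightarrow> takeWhile ((=) x) (replicate i x @ y # ys) = replicate i x"
  by (induction i) auto

definition starting_with :: "letter2 \<Rightarrow> letter2 list set" where
  "starting_with c = {c # w | w. reduced (c # w)}"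

lemma l_coset_replicate_starting_with_disjoint:
  assumes "fst x \<noteq> fst c" "i \<noteq> i'"
  shows "(replicate i x <#\<^bsub>free_group2\<^esub> starting_with c)
    \<inter> (replicate i' x <#\<^bsub>free_group2\<^esub> starting_with c) = {}"
proof -
  have "x \<noteq> c"
    using assms(1) by blast
  have reduce_eq: "reduce (replicate k x @ w) = replicate k x @ w"
    and prefix: "takeWhile ((=) x) (replicate k x @ w) = replicate k x"
    if "w \<in> starting_with c" for k w
    using that assms(1) \<open>x \<noteq> c\<close>
    by (auto simp: starting_with_def reduce_reduced reduced_replicate_append
        takeWhile_replicate_append)
  have "replicate i x @ w \<noteq> replicate i' x @ w'"
    if "w \<in> starting_with c" "w' \<in> starting_with c" for w w'
  proof
    assume "replicate i x @ w = replicate i' x @ w'"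
    then have "replicate i x = replicate i' x"
      using prefix that by metis
    with assms(2) show False
      by simp
  qed
  then show ?thesis
    by (auto simp: l_coset_free_group2 reduce_eq)
qed

lemma free_group2_eq_starting_with_Un:
  "carrier free_group2 = starting_with (False, False)
     \<union> ([(False, False)] <#\<^bsub>free_group2\<^esub> starting_with (False, True))"
proof (intro equalityI subsetI)
  fix v assume "v \<in> carrier free_group2"
  then have v: "reduced v" by (simp add: free_group2_def)
  show "v \<in> starting_with (False, False)
      \<union> ([(False, False)] <#\<^bsub>free_group2\<^esub> starting_with (False, True))"
  proof (cases "\<exists>w. v = (False, False) # w")
    case True
    with v show ?thesis by (auto simp: starting_with_def)
  next
    case False
    then have "reduced ((False, True) # v)"
      using v by (cases v) (auto simp: inverse_letters_def)
    moreover from this have "reduce ((False, False) # (False, True) # v) = v"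
      using reduce_append[of "[(False, False)]" "(False, True) # v"]
      by (simp add: reduce_reduced red_cons_def inverse_letters_def)
    ultimately have "v \<in> [(False, False)] <#\<^bsub>free_group2\<^esub> starting_with (False, True)"
      unfolding l_coset_free_group2 starting_with_def
      by (auto intro!: image_eqI[where x = "(False, True) # v"])
    then show ?thesis
      by blast
  qed
qed (unfold l_coset_free_group2, auto simp: free_group2_def starting_with_def reduced_reduce)

lemma free_group2_tower:
  "weak_paradoxical_tower free_group2 2 ((\<lambda>i. replicate i (True, False)) ` {..<m})
     (\<lambda>j. starting_with (if j = 1 then (False, False) else (False, True)))
     (\<lambda>j. if j = 1 then [] else [(False, False)])"
  unfolding weak_paradoxical_tower_def
proof (intro conjI)
  show "(\<lambda>i. replicate i (True, False)) ` {..<m} \<subseteq> carrier free_group2"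
    by (auto simp: free_group2_def reduced_replicate)
  show "\<forall>j\<in>{1..2}. starting_with (if j = 1 then (False, False) else (False, True)) \<subseteq> carrier free_group2
      \<and> (if j = 1 then [] else [(False, False)]) \<in> carrier free_group2"
    by (auto simp: free_group2_def starting_with_def)
  show "\<forall>j\<in>{1..2}. \<forall>d\<in>(\<lambda>i. replicate i (True, False)) ` {..<m}.
      \<forall>d'\<in>(\<lambda>i. replicate i (True, False)) ` {..<m}. d \<noteq> d' \<longrightarrow>
        (d <#\<^bsub>free_group2\<^esub> starting_with (if j = 1 then (False, False) else (False, True)))
        \<inter> (d' <#\<^bsub>free_group2\<^esub> starting_with (if j = 1 then (False, False) else (False, True))) = {}"
    by (auto intro!: l_coset_replicate_starting_with_disjoint)
  have "{1..2::nat} = {1, 2}"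
    by auto
  moreover have "[] <#\<^bsub>free_group2\<^esub> starting_with c = starting_with c" for c
    unfolding l_coset_free_group2 starting_with_def by (force simp: reduce_reduced)
  ultimately show "(\<Union>j\<in>{1..2::nat}. (if j = 1 then [] else [(False, False)])
      <#\<^bsub>free_group2\<^esub> starting_with (if j = 1 then (False, False) else (False, True)))
    = carrier free_group2"
    by (simp add: free_group2_eq_starting_with_Un)
qed

lemma free_group2_weak_2_paradoxical_towers: "weak_n_paradoxical_towers free_group2 2"
  unfolding weak_n_paradoxical_towers_iff
proof
  fix m
  have "card ((\<lambda>i. replicate i (True, False)) ` {..<m}) = m"
    by (simp add: card_image inj_on_def)
  then show "\<exists>D K g. finite D \<and> m \<le> card D \<and> weak_paradoxical_tower free_group2 2 D K g"
    using free_group2_tower[of m] by (metis finite_imageI finite_lessThan order_refl)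
qed

theorem corollary3p13:
  assumes "group G" and "contains_F2 G"
  shows "weak_paradoxical_towers G"
proof -
  obtain h where "h \<in> hom free_group2 G" "inj_on h (carrier free_group2)"
    using assms(2) unfolding contains_F2_def by blast
  then have "weak_n_paradoxical_towers G 2"
    using weak_n_paradoxical_towers_inj_hom[OF group_free_group2 assms(1)]
      free_group2_weak_2_paradoxical_towers by blast
  then show ?thesis
    unfolding weak_paradoxical_towers_def by blast
qed

end
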